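(* Let $a\in\mathbb F^*$ and let $g,h\in\mathcal R$ satisfy $x^n-a=hg$, and let $\widehat h^{l}=\rho_l(\theta^{-n}(h))$. Then $$M^\theta_a(\overline g)\,M^\theta_c(\overline{a^{-1}h})=M^\theta_a(\overline g)\,M^\theta_{a^{-1}}(\overline{\widehat h^{l}})^{\mathsf T}=0,\qquad\text{where } c=\gamma(a,g).$$
   Context: $\mathbb F$ is a finite field, $\theta\in\mathrm{Aut}(\mathbb F)$, $\mathcal R=\mathbb F[x;\theta]$ the skew polynomial ring (elements $\sum f_ix^i$ with left coefficients, $xb=\theta(b)x$). Integer powers of $\theta$ act on $\mathcal R$ coefficientwise. Fix $n\in\mathbb N$. For $b\in\mathbb F^*$, $\mathcal S_b=\mathcal R/\mathcal R(x^n-b)$, $\overline f$ is the coset of $f$ (in $M^\theta_b(\overline f)$ taken in $\mathcal S_b$), $\mathfrak v_b:\mathcal S_b\to\mathbb F^n$ the inverse of $(c_0,\dots,c_{n-1})\mapsto\overline{\sum_{i=0}^{n-1}c_ix^i}$. $M^\theta_b(\overline f)$ is the $n\times n$ matrix whose row with index $i$ ($0\le i\le n-1$) is $\mathfrak v_b(\overline{x^if})$. For a right divisor $g=\sum g_ix^i$ of $x^n-a$, $\gamma(a,g)=ag_0^{-1}\theta^n(g_0)$. For nonzero $f=\sum_{i=0}^tf_ix^i$ with $f_t\neq0$, $\rho_l(f)=\sum_{i=0}^t\theta^i(f_{t-i})x^i$. *)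

theory Defs
  imports "HOL-Computational_Algebra.Polynomial" "Jordan_Normal_Form.Matrix"
begin

text \<open>Skew polynomials over a field are represented by their (left) coefficient
  sequences, stored in the type 'a poly; only the multiplication differs.\<close>

definition field_aut :: "('a::field \<Rightarrow> 'a) \<Rightarrow> bool" where
  "field_aut \<theta> \<longleftrightarrow> bij \<theta> \<and> (\<forall>x y. \<theta> (x + y) = \<theta> x + \<theta> y) \<and> (\<forall>x y. \<theta> (x * y) = \<theta> x * \<theta> y)"

definition skew_mult :: "('a::field \<Rightarrow> 'a) \<Rightarrow> 'a poly \<Rightarrow> 'a poly \<Rightarrow> 'a poly" where
  "skew_mult \<theta> f g = (\<Sum>i\<le>degree f. \<Sum>j\<le>degree g. monom (coeff f i * (\<theta> ^^ i) (coeff g j)) (i + j))"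

definition xn_minus :: "nat \<Rightarrow> 'a::field \<Rightarrow> 'a poly" where
  "xn_minus n b = monom 1 n - [:b:]"

definition skew_rem :: "('a::field \<Rightarrow> 'a) \<Rightarrow> nat \<Rightarrow> 'a \<Rightarrow> 'a poly \<Rightarrow> 'a poly" where
  "skew_rem \<theta> n b f = (THE r. (\<forall>i\<ge>n. coeff r i = 0) \<and>
       (\<exists>q. f = skew_mult \<theta> q (xn_minus n b) + r))"

definition Mtheta :: "('a::field \<Rightarrow> 'a) \<Rightarrow> nat \<Rightarrow> 'a \<Rightarrow> 'a poly \<Rightarrow> 'a mat" where
  "Mtheta \<theta> n b f = mat n n (\<lambda>(i, j). coeff (skew_rem \<theta> n b (skew_mult \<theta> (monom 1 i) f)) j)"

definition gamma :: "('a::field \<Rightarrow> 'a) \<Rightarrow> nat \<Rightarrow> 'a \<Rightarrow> 'a poly \<Rightarrow> 'a" where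
  "gamma \<theta> n a g = a * inverse (coeff g 0) * (\<theta> ^^ n) (coeff g 0)"

definition rho_l :: "('a::field \<Rightarrow> 'a) \<Rightarrow> 'a poly \<Rightarrow> 'a poly" where
  "rho_l \<theta> f = (\<Sum>i\<le>degree f. monom ((\<theta> ^^ i) (coeff f (degree f - i))) i)"

definition theta_neg_pow :: "('a::field \<Rightarrow> 'a) \<Rightarrow> nat \<Rightarrow> 'a poly \<Rightarrow> 'a poly" where
  "theta_neg_pow \<theta> n h = map_poly ((Hilbert_Choice.inv \<theta>) ^^ n) h"

end

theory Submission
  imports Defs
begin

text \<open>
  Every remainder of \<open>x\<^sup>i g\<close> modulo \<open>x\<^sup>n - a = h g\<close> is a left multiple \<open>p g\<close>.
  Since \<open>x\<^sup>n g = \<theta>\<^sup>n(g) x\<^sup>n\<close>, the factorization gives \<open>\<theta>\<^sup>n(g) h = x\<^sup>n - c\<close> and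
  \<open>g a\<^sup>-\<^sup>1 h = c\<^sup>-\<^sup>1 (x\<^sup>n - c)\<close> with \<open>c = \<gamma>(a, g)\<close>, so \<open>p g a\<^sup>-\<^sup>1 h\<close> vanishes
  modulo \<open>x\<^sup>n - c\<close>; this kills the first product.

  For the second, \<open>\<rho>\<^sub>l\<close> is anti-multiplicative, so applying it to
  \<open>\<theta>\<^sup>-\<^sup>n(h) \<theta>\<^sup>-\<^sup>n(g) = x\<^sup>n - \<theta>\<^sup>-\<^sup>n(a)\<close> shows that \<open>\<rho>\<^sub>l(\<theta>\<^sup>-\<^sup>n(h))\<close> right-divides
  \<open>x\<^sup>n - a\<^sup>-\<^sup>1\<close>, and the rows of the second matrix are coefficient vectors of its left
  multiples \<open>p' \<rho>\<^sub>l(\<theta>\<^sup>-\<^sup>n(h))\<close> with \<open>deg p' + deg h < n\<close>. Pairing a coefficient vector with a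
  reflected polynomial is skew multiplication, so each entry is a combination of coefficients of
  \<open>p g \<theta>\<^sup>-\<^sup>n(h) = p (x\<^sup>n - \<theta>\<^sup>-\<^sup>n(c))\<close> in degrees \<open>deg h, \<dots>, n - 1\<close>; these vanish because
  \<open>deg p < deg h\<close>.
\<close>

lemma field_aut_imp_field_isom:
  assumes "field_aut \<theta>" shows "field_isom \<theta>"
proof -
  have add: "\<theta> (x + y) = \<theta> x + \<theta> y" and mult: "\<theta> (x * y) = \<theta> x * \<theta> y"
    and surj: "surj \<theta>" for x y
    using assms bij_is_surj unfolding field_aut_def by blast+
  obtain y where "\<theta> y = 1" using surj by (metis surjD)
  then have "\<theta> 1 = 1" using mult[of 1 y] by simp
  moreover have "\<theta> 0 = 0" using add[of 0 0] by (metis add_cancel_right_right)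
  ultimately show ?thesis by unfold_locales (simp_all add: add mult surj)
qed

lemma field_isom_funpow:
  fixes f :: "'a::field \<Rightarrow> 'a"
  assumes "field_isom f" shows "field_isom (f ^^ n)"
proof (induction n)
  case 0 show ?case by unfold_locales auto
next
  case (Suc n)
  interpret f: field_isom f by fact
  interpret fn: field_isom "f ^^ n" by fact
  show ?case
    using surj_fn[OF f.surj, of "Suc n"] by unfold_locales (simp_all add: hom_distribs)
qed

section \<open>Skew polynomial multiplication\<close>

locale skew_poly =
  fixes \<theta> :: "'a::field \<Rightarrow> 'a"
  assumes field_isom: "field_isom \<theta>"
begin

sublocale pow: field_hom "\<theta> ^^ i" for i
  using field_isom_funpow[OF field_isom] by (rule field_isom.axioms(1))

lemma funpow_funpow_apply[simp]: "(\<theta> ^^ i) ((\<theta> ^^ j) x) = (\<theta> ^^ (i + j)) x"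
  by (simp add: funpow_add)

abbreviation skew_times :: "'a poly \<Rightarrow> 'a poly \<Rightarrow> 'a poly" (infixl "\<diamondop>" 70)
  where "f \<diamondop> g \<equiv> skew_mult \<theta> f g"

lemma coeff_skew_mult:
  "coeff (f \<diamondop> g) k = (\<Sum>i\<le>k. coeff f i * (\<theta> ^^ i) (coeff g (k - i)))"
proof -
  have inner: "(\<Sum>j\<le>degree g. if i + j = k then coeff f i * (\<theta> ^^ i) (coeff g j) else 0)
      = (if i \<le> k then coeff f i * (\<theta> ^^ i) (coeff g (k - i)) else 0)" for i
  proof -
    have "(\<Sum>j\<le>degree g. if i + j = k then coeff f i * (\<theta> ^^ i) (coeff g j) else 0)
       = (\<Sum>j\<le>degree g. if j = k - i \<and> i \<le> k then coeff f i * (\<theta> ^^ i) (coeff g j) else 0)"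
      by (intro sum.cong) auto
    then show ?thesis by (auto simp: coeff_eq_0)
  qed
  have "coeff (f \<diamondop> g) k
      = (\<Sum>i\<le>degree f. if i \<le> k then coeff f i * (\<theta> ^^ i) (coeff g (k - i)) else 0)"
    unfolding skew_mult_def by (simp add: coeff_sum coeff_monom inner)
  also have "\<dots> = (\<Sum>i\<le>max (degree f) k. if i \<le> k then coeff f i * (\<theta> ^^ i) (coeff g (k - i)) else 0)"
    by (intro sum.mono_neutral_left) (auto simp: coeff_eq_0)
  also have "\<dots> = (\<Sum>i\<le>k. coeff f i * (\<theta> ^^ i) (coeff g (k - i)))"
    by (intro sum.mono_neutral_cong_right) (auto simp: coeff_eq_0)
  finally show ?thesis .
qed

lemma skew_mult_add_left: "(f + g) \<diamondop> h = f \<diamondop> h + g \<diamondop> h"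
  by (rule poly_eqI) (simp add: coeff_skew_mult distrib_right sum.distrib)

lemma skew_mult_add_right: "f \<diamondop> (g + h) = f \<diamondop> g + f \<diamondop> h"
  by (rule poly_eqI) (simp add: coeff_skew_mult distrib_left sum.distrib hom_distribs)

lemma skew_mult_diff_left: "(f - g) \<diamondop> h = f \<diamondop> h - g \<diamondop> h"
  by (rule poly_eqI) (simp add: coeff_skew_mult left_diff_distrib sum_subtractf)

lemma skew_mult_diff_right: "f \<diamondop> (g - h) = f \<diamondop> g - f \<diamondop> h"
  by (rule poly_eqI) (simp add: coeff_skew_mult right_diff_distrib sum_subtractf hom_distribs)

lemma skew_mult_0_left[simp]: "0 \<diamondop> f = 0"
  by (rule poly_eqI) (simp add: coeff_skew_mult)

lemma skew_mult_0_right[simp]: "f \<diamondop> 0 = 0"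
  by (rule poly_eqI) (simp add: coeff_skew_mult)

lemma skew_mult_sum_left: "(\<Sum>i\<in>A. f i) \<diamondop> g = (\<Sum>i\<in>A. f i \<diamondop> g)"
  by (induction A rule: infinite_finite_induct) (auto simp: skew_mult_add_left)

lemma skew_mult_sum_right: "g \<diamondop> (\<Sum>i\<in>A. f i) = (\<Sum>i\<in>A. g \<diamondop> f i)"
  by (induction A rule: infinite_finite_induct) (auto simp: skew_mult_add_right)

lemma skew_mult_smult_left: "Polynomial.smult c f \<diamondop> g = Polynomial.smult c (f \<diamondop> g)"
  by (rule poly_eqI) (simp add: coeff_skew_mult sum_distrib_left mult.assoc)

lemma coeff_monom_skew_mult:
  "coeff (monom c i \<diamondop> f) k = (if i \<le> k then c * (\<theta> ^^ i) (coeff f (k - i)) else 0)"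
proof -
  have "coeff (monom c i \<diamondop> f) k = (\<Sum>p\<le>k. if p = i then c * (\<theta> ^^ p) (coeff f (k - p)) else 0)"
    unfolding coeff_skew_mult by (intro sum.cong) (auto simp: coeff_monom)
  then show ?thesis by simp
qed

lemma coeff_skew_mult_monom_1:
  "coeff (f \<diamondop> monom 1 n) k = (if n \<le> k then coeff f (k - n) else 0)"
proof -
  have "coeff (f \<diamondop> monom 1 n) k = (\<Sum>p\<le>k. if p = k - n \<and> n \<le> k then coeff f p else 0)"
    unfolding coeff_skew_mult by (intro sum.cong) (auto simp: coeff_monom)
  then show ?thesis by simp
qed

lemma coeff_skew_mult_const: "coeff (f \<diamondop> [:c:]) k = coeff f k * (\<theta> ^^ k) c"
proof -
  have "coeff (f \<diamondop> [:c:]) k = (\<Sum>p\<le>k. if p = k then coeff f p * (\<theta> ^^ p) c else 0)"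
    unfolding coeff_skew_mult by (intro sum.cong) (auto simp: coeff_pCons split: nat.split)
  then show ?thesis by simp
qed

lemma const_skew_mult: "[:c:] \<diamondop> f = Polynomial.smult c f"
  using coeff_monom_skew_mult[of c 0 f] by (intro poly_eqI) (simp add: monom_0)

lemma monom_skew_mult: "monom c l \<diamondop> u = Polynomial.smult c (monom 1 l \<diamondop> u)"
  by (rule poly_eqI) (simp add: coeff_monom_skew_mult)

lemma monom_skew_mult_monom: "monom c i \<diamondop> monom d j = monom (c * (\<theta> ^^ i) d) (i + j)"
  by (rule poly_eqI) (auto simp: coeff_monom_skew_mult coeff_monom)

lemma monom_1_skew_mult_commute: "monom 1 k \<diamondop> f = map_poly (\<theta> ^^ k) f \<diamondop> monom 1 k"
  by (rule poly_eqI) (simp add: coeff_monom_skew_mult coeff_skew_mult_monom_1 coeff_map_poly)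

lemma skew_mult_1_right[simp]: "f \<diamondop> 1 = f"
  by (rule poly_eqI) (metis coeff_skew_mult_const pow.hom_one mult_1_right one_pCons)

lemma skew_mult_assoc: "f \<diamondop> g \<diamondop> h = f \<diamondop> (g \<diamondop> h)"
proof -
  have monoms: "monom a i \<diamondop> monom b j \<diamondop> monom c l = monom a i \<diamondop> (monom b j \<diamondop> monom c l)"
    for a b c i j l
    by (simp add: monom_skew_mult_monom hom_distribs mult.assoc add.assoc)
  show ?thesis
    by (subst (1 2) poly_as_sum_of_monoms[symmetric, of f],
        subst (1 2) poly_as_sum_of_monoms[symmetric, of g],
        subst (1 2) poly_as_sum_of_monoms[symmetric, of h])
       (simp add: skew_mult_sum_left skew_mult_sum_right monoms)
qed

lemma coeff_skew_mult_degree: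
  "coeff (f \<diamondop> g) (degree f + degree g) = lead_coeff f * (\<theta> ^^ degree f) (lead_coeff g)"
proof -
  have vanish: "coeff f i * (\<theta> ^^ i) (coeff g (degree f + degree g - i)) = 0"
    if "i \<noteq> degree f" for i
    using that by (cases "degree f < i") (auto simp: coeff_eq_0)
  show ?thesis
    unfolding coeff_skew_mult
    by (subst sum.remove[of _ "degree f"]) (auto intro!: sum.neutral vanish)
qed

lemma degree_skew_mult_le: "degree (f \<diamondop> g) \<le> degree f + degree g"
proof (rule degree_le, intro allI impI)
  fix k assume k: "degree f + degree g < k"
  have vanish: "coeff f i * (\<theta> ^^ i) (coeff g (k - i)) = 0" for i
    using k by (cases "degree f < i") (auto simp: coeff_eq_0)
  show "coeff (f \<diamondop> g) k = 0"
    unfolding coeff_skew_mult by (intro sum.neutral ballI vanish)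
qed

lemma degree_skew_mult:
  assumes "f \<noteq> 0" "g \<noteq> 0" shows "degree (f \<diamondop> g) = degree f + degree g"
  using assms coeff_skew_mult_degree[of f g]
  by (intro antisym degree_skew_mult_le le_degree) simp

lemma skew_mult_eq_0_iff: "f \<diamondop> g = 0 \<longleftrightarrow> f = 0 \<or> g = 0"
  using coeff_skew_mult_degree[of f g] by auto

lemma map_poly_skew_mult:
  assumes "semiring_hom \<sigma>" and commute: "\<And>x. \<sigma> (\<theta> x) = \<theta> (\<sigma> x)"
  shows "map_poly \<sigma> (f \<diamondop> g) = map_poly \<sigma> f \<diamondop> map_poly \<sigma> g"
proof -
  interpret \<sigma>: semiring_hom \<sigma> by fact
  have "\<sigma> ((\<theta> ^^ i) x) = (\<theta> ^^ i) (\<sigma> x)" for i x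
    by (induction i) (simp_all add: commute)
  then show ?thesis
    by (intro poly_eqI) (simp add: coeff_map_poly coeff_skew_mult hom_distribs)
qed

section \<open>Right division by \<open>x\<^sup>n - b\<close>\<close>

lemma coeff_xn_minus:
  "coeff (xn_minus n b) k = (if k = n then 1 else 0) - (if k = 0 then b else 0)"
  by (simp add: xn_minus_def coeff_monom coeff_pCons split: nat.split)

lemma degree_xn_minus: "n > 0 \<Longrightarrow> degree (xn_minus n b) = n"
  by (intro antisym degree_le le_degree) (auto simp: coeff_xn_minus)

lemma lead_coeff_xn_minus: "n > 0 \<Longrightarrow> lead_coeff (xn_minus n b) = 1"
  by (simp add: degree_xn_minus coeff_xn_minus)

lemma xn_minus_neq_0: "n > 0 \<Longrightarrow> xn_minus n b \<noteq> 0"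
  using lead_coeff_xn_minus[of n b] by auto

lemma monom_skew_mult_xn_minus:
  "monom c e \<diamondop> xn_minus n b = monom c (e + n) - monom (c * (\<theta> ^^ e) b) e"
  unfolding xn_minus_def monom_0[symmetric]
  by (simp add: skew_mult_diff_right monom_skew_mult_monom)

lemma coeff_skew_mult_xn_minus_below:
  assumes "degree p < k" "k < n"
  shows "coeff (p \<diamondop> xn_minus n b) k = 0"
  using assms unfolding xn_minus_def
  by (simp add: skew_mult_diff_right coeff_skew_mult_monom_1 coeff_skew_mult_const coeff_eq_0)

lemma skew_division_exists:
  assumes "n > 0"
  shows "\<exists>q r. (\<forall>i\<ge>n. coeff r i = 0) \<and> f = q \<diamondop> xn_minus n b + r"
proof (induction "degree f" arbitrary: f rule: less_induct)
  case less
  show ?case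
  proof (cases "degree f < n")
    case True
    then have "\<forall>i\<ge>n. coeff f i = 0" by (auto intro: coeff_eq_0)
    then show ?thesis by (intro exI[of _ 0] exI[of _ f]) simp
  next
    case False
    define d where "d = degree f"
    define f' where "f' = f - monom (lead_coeff f) (d - n) \<diamondop> xn_minus n b"
    have f': "f' = f - monom (lead_coeff f) d + monom (lead_coeff f * (\<theta> ^^ (d - n)) b) (d - n)"
      using False unfolding f'_def monom_skew_mult_xn_minus d_def by simp
    have "coeff f' k = 0" if "k \<ge> d" for k
      using that \<open>n > 0\<close> False unfolding f' d_def
      by (cases "k = degree f") (auto simp: coeff_monom coeff_eq_0)
    moreover have "d > 0" using False \<open>n > 0\<close> d_def by simp
    ultimately have "degree f' < degree f"
      using degree_le[of "d - 1" f'] unfolding d_def by fastforce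
    then obtain q r where "\<forall>i\<ge>n. coeff r i = 0" "f' = q \<diamondop> xn_minus n b + r"
      using less by blast
    moreover have "f = (q + monom (lead_coeff f) (d - n)) \<diamondop> xn_minus n b + r"
      using calculation(2) unfolding f'_def by (simp add: skew_mult_add_left algebra_simps)
    ultimately show ?thesis by blast
  qed
qed

lemma skew_remainder_unique:
  assumes "n > 0" and r: "\<forall>i\<ge>n. coeff r i = 0" and r': "\<forall>i\<ge>n. coeff r' i = 0"
    and eq: "q \<diamondop> xn_minus n b + r = q' \<diamondop> xn_minus n b + r'"
  shows "r = r'"
proof (rule ccontr)
  assume "r \<noteq> r'"
  have diff: "(q - q') \<diamondop> xn_minus n b = r' - r"
    using eq by (simp add: skew_mult_diff_left algebra_simps)
  then have "q \<noteq> q'" using \<open>r \<noteq> r'\<close> by auto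
  moreover have "coeff ((q - q') \<diamondop> xn_minus n b) (degree (q - q') + n) = lead_coeff (q - q')"
    using coeff_skew_mult_degree[of "q - q'" "xn_minus n b"]
    using \<open>n > 0\<close> by (simp add: degree_xn_minus coeff_xn_minus)
  ultimately have "coeff ((q - q') \<diamondop> xn_minus n b) (degree (q - q') + n) \<noteq> 0"
    by (metis leading_coeff_0_iff right_minus_eq)
  then show False using r r' diff by simp
qed

lemma skew_rem_spec:
  assumes "n > 0"
  shows "\<forall>i\<ge>n. coeff (skew_rem \<theta> n b f) i = 0"
    and "\<exists>q. f = q \<diamondop> xn_minus n b + skew_rem \<theta> n b f"
proof -
  have "\<exists>!r. (\<forall>i\<ge>n. coeff r i = 0) \<and> (\<exists>q. f = q \<diamondop> xn_minus n b + r)"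
    using skew_division_exists[OF assms] skew_remainder_unique[OF assms] by metis
  then have "(\<forall>i\<ge>n. coeff (skew_rem \<theta> n b f) i = 0)
      \<and> (\<exists>q. f = q \<diamondop> xn_minus n b + skew_rem \<theta> n b f)"
    unfolding skew_rem_def by (rule theI')
  then show "\<forall>i\<ge>n. coeff (skew_rem \<theta> n b f) i = 0"
    and "\<exists>q. f = q \<diamondop> xn_minus n b + skew_rem \<theta> n b f" by blast+
qed

lemma degree_skew_rem_less: "n > 0 \<Longrightarrow> degree (skew_rem \<theta> n b f) < n"
  using skew_rem_spec(1)[of n b f] degree_le[of "n - 1" "skew_rem \<theta> n b f"] by fastforce

lemma skew_rem_eqI:
  assumes "n > 0" "\<forall>i\<ge>n. coeff r i = 0" "f = q \<diamondop> xn_minus n b + r"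
  shows "skew_rem \<theta> n b f = r"
  using skew_rem_spec[OF \<open>n > 0\<close>, where b = b and f = f] skew_remainder_unique[OF \<open>n > 0\<close>] assms(2,3) by metis

lemma skew_rem_add:
  assumes "n > 0" shows "skew_rem \<theta> n b (f + g) = skew_rem \<theta> n b f + skew_rem \<theta> n b g"
proof -
  obtain q1 q2 where "f = q1 \<diamondop> xn_minus n b + skew_rem \<theta> n b f"
    and "g = q2 \<diamondop> xn_minus n b + skew_rem \<theta> n b g"
    using skew_rem_spec(2)[OF assms] by metis
  then have "f + g = (q1 + q2) \<diamondop> xn_minus n b + (skew_rem \<theta> n b f + skew_rem \<theta> n b g)"
    by (simp add: skew_mult_add_left algebra_simps)
  then show ?thesis using skew_rem_spec(1)[OF assms] by (intro skew_rem_eqI[OF assms]) auto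
qed

lemma skew_rem_smult:
  assumes "n > 0" shows "skew_rem \<theta> n b (Polynomial.smult c f) = Polynomial.smult c (skew_rem \<theta> n b f)"
proof -
  obtain q where "f = q \<diamondop> xn_minus n b + skew_rem \<theta> n b f"
    using skew_rem_spec(2)[OF assms] by metis
  then have "Polynomial.smult c f = Polynomial.smult c q \<diamondop> xn_minus n b + Polynomial.smult c (skew_rem \<theta> n b f)"
    by (metis skew_mult_smult_left smult_add_right)
  then show ?thesis using skew_rem_spec(1)[OF assms] by (intro skew_rem_eqI[OF assms]) auto
qed

lemma skew_rem_sum:
  assumes "n > 0" shows "skew_rem \<theta> n b (\<Sum>i\<in>A. f i) = (\<Sum>i\<in>A. skew_rem \<theta> n b (f i))"
  by (induction A rule: infinite_finite_induct)
     (auto simp: skew_rem_add[OF assms] intro: skew_rem_eqI[OF assms, where q = 0])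

lemma skew_rem_left_multiple: "n > 0 \<Longrightarrow> skew_rem \<theta> n b (q \<diamondop> xn_minus n b) = 0"
  by (rule skew_rem_eqI) auto

lemma skew_rem_right_factor:
  assumes "n > 0" "xn_minus n b = h \<diamondop> g"
  shows "\<exists>p. skew_rem \<theta> n b (f \<diamondop> g) = p \<diamondop> g"
proof -
  obtain q where "f \<diamondop> g = q \<diamondop> xn_minus n b + skew_rem \<theta> n b (f \<diamondop> g)"
    using skew_rem_spec(2)[OF assms(1)] by blast
  then have "skew_rem \<theta> n b (f \<diamondop> g) = (f - q \<diamondop> h) \<diamondop> g"
    by (simp add: assms(2) skew_mult_diff_left skew_mult_assoc algebra_simps)
  then show ?thesis by blast
qed

lemma Mtheta_mult_Mtheta_entry:
  assumes "n > 0" "i < n" "j < n"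
  shows "(Mtheta \<theta> n b f * Mtheta \<theta> n c u) $$ (i, j)
       = coeff (skew_rem \<theta> n c (skew_rem \<theta> n b (monom 1 i \<diamondop> f) \<diamondop> u)) j"
proof -
  define r where "r = skew_rem \<theta> n b (monom 1 i \<diamondop> f)"
  have "degree r \<le> n - 1"
    using skew_rem_spec(1)[OF \<open>n > 0\<close>] unfolding r_def by (intro degree_le) auto
  then have "(\<Sum>l<n. monom (coeff r l) l) = r"
    using poly_as_sum_of_monoms'[of r "n - 1"] \<open>n > 0\<close> by (metis Suc_pred' lessThan_Suc_atMost)
  then have r_u: "(\<Sum>l<n. Polynomial.smult (coeff r l) (monom 1 l \<diamondop> u)) = r \<diamondop> u"
    by (metis (no_types, lifting) skew_mult_sum_left monom_skew_mult sum.cong)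
  have "(Mtheta \<theta> n b f * Mtheta \<theta> n c u) $$ (i, j)
      = (\<Sum>l<n. coeff r l * coeff (skew_rem \<theta> n c (monom 1 l \<diamondop> u)) j)"
    using assms unfolding Mtheta_def r_def by (simp add: scalar_prod_def atLeast0LessThan)
  also have "\<dots> = coeff (skew_rem \<theta> n c (\<Sum>l<n. Polynomial.smult (coeff r l) (monom 1 l \<diamondop> u))) j"
    by (simp add: skew_rem_sum[OF \<open>n > 0\<close>] skew_rem_smult[OF \<open>n > 0\<close>] coeff_sum)
  also have "\<dots> = coeff (skew_rem \<theta> n c (r \<diamondop> u)) j"
    by (simp only: r_u)
  finally show ?thesis unfolding r_def .
qed

section \<open>Reflection\<close>

text \<open>\<open>\<rho>\<^sub>l\<close> relative to a formal degree \<open>N\<close> instead of the actual degree: unlike \<open>\<rho>\<^sub>l\<close>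
  itself it is additive, so anti-multiplicativity can be checked on monomials.\<close>

definition skew_reflect :: "nat \<Rightarrow> 'a poly \<Rightarrow> 'a poly" where
  "skew_reflect N f = (\<Sum>i\<le>N. monom ((\<theta> ^^ i) (coeff f (N - i))) i)"

lemma rho_l_eq_skew_reflect: "rho_l \<theta> f = skew_reflect (degree f) f"
  unfolding rho_l_def skew_reflect_def ..

lemma coeff_skew_reflect:
  "coeff (skew_reflect N f) i = (if i \<le> N then (\<theta> ^^ i) (coeff f (N - i)) else 0)"
  unfolding skew_reflect_def by (simp add: coeff_sum coeff_monom)

lemma skew_reflect_sum: "skew_reflect N (\<Sum>i\<in>A. f i) = (\<Sum>i\<in>A. skew_reflect N (f i))"
  by (rule poly_eqI) (simp add: coeff_skew_reflect coeff_sum hom_distribs)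

lemma skew_reflect_monom:
  "p \<le> N \<Longrightarrow> skew_reflect N (monom x p) = monom ((\<theta> ^^ (N - p)) x) (N - p)"
  by (rule poly_eqI) (auto simp: coeff_skew_reflect coeff_monom)

lemma skew_reflect_skew_mult:
  assumes "degree f \<le> d" "degree g \<le> e"
  shows "skew_reflect (d + e) (f \<diamondop> g) = map_poly (\<theta> ^^ d) (skew_reflect e g) \<diamondop> skew_reflect d f"
proof -
  have monoms: "skew_reflect (d + e) (monom x p \<diamondop> monom y r)
      = map_poly (\<theta> ^^ d) (skew_reflect e (monom y r)) \<diamondop> skew_reflect d (monom x p)"
    if "p \<le> d" "r \<le> e" for x y p r
    using that
    by (simp add: skew_reflect_monom monom_skew_mult_monom map_poly_monom hom_distribs
        mult.commute add.commute add.left_commute)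
  have map_poly_sum: "map_poly (\<theta> ^^ d) (\<Sum>i\<in>A. F i) = (\<Sum>i\<in>A. map_poly (\<theta> ^^ d) (F i))"
    for A and F :: "nat \<Rightarrow> 'a poly"
    by (rule poly_eqI) (simp add: coeff_map_poly coeff_sum hom_distribs)
  have "skew_reflect (d + e) ((\<Sum>p\<le>d. monom (coeff f p) p) \<diamondop> (\<Sum>r\<le>e. monom (coeff g r) r))
      = map_poly (\<theta> ^^ d) (skew_reflect e (\<Sum>r\<le>e. monom (coeff g r) r))
        \<diamondop> skew_reflect d (\<Sum>p\<le>d. monom (coeff f p) p)"
    by (simp add: skew_mult_sum_left skew_mult_sum_right skew_reflect_sum map_poly_sum monoms)
       (rule sum.swap)
  then show ?thesis by (simp add: poly_as_sum_of_monoms' assms)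
qed

lemma rho_l_skew_mult:
  assumes "f \<noteq> 0" "g \<noteq> 0"
  shows "rho_l \<theta> (f \<diamondop> g) = map_poly (\<theta> ^^ degree f) (rho_l \<theta> g) \<diamondop> rho_l \<theta> f"
  unfolding rho_l_eq_skew_reflect degree_skew_mult[OF assms] by (rule skew_reflect_skew_mult) auto

lemma degree_rho_l: "coeff f 0 \<noteq> 0 \<Longrightarrow> degree (rho_l \<theta> f) = degree f"
  by (intro antisym degree_le le_degree) (auto simp: rho_l_eq_skew_reflect coeff_skew_reflect)

lemma monom_1_skew_mult_rho_l: "monom 1 t \<diamondop> rho_l \<theta> w = skew_reflect (degree w + t) w"
proof (rule poly_eqI)
  fix l
  show "coeff (monom 1 t \<diamondop> rho_l \<theta> w) l = coeff (skew_reflect (degree w + t) w) l"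
  proof (cases "t \<le> l")
    case True
    then have "degree w - (l - t) = degree w + t - l" "t + (l - t) = l" by simp_all
    then show ?thesis
      using True by (auto simp: rho_l_eq_skew_reflect coeff_monom_skew_mult coeff_skew_reflect)
  next
    case False
    then show ?thesis by (simp add: coeff_monom_skew_mult coeff_skew_reflect coeff_eq_0)
  qed
qed

text \<open>Pairing a coefficient vector with a reflected polynomial is skew multiplication; this is
  how the transpose in the second product is absorbed.\<close>

lemma sum_coeff_mult_skew_reflect:
  assumes "N < n"
  shows "(\<Sum>l<n. coeff u l * coeff (skew_reflect N w) l) = coeff (u \<diamondop> w) N"
proof -
  have "(\<Sum>l<n. coeff u l * coeff (skew_reflect N w) l)
      = (\<Sum>l<n. if l \<le> N then coeff u l * (\<theta> ^^ l) (coeff w (N - l)) else 0)"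
    by (intro sum.cong) (auto simp: coeff_skew_reflect)
  also have "\<dots> = (\<Sum>l\<le>N. coeff u l * (\<theta> ^^ l) (coeff w (N - l)))"
    using assms by (intro sum.mono_neutral_cong_right) auto
  finally show ?thesis by (simp add: coeff_skew_mult)
qed

lemma sum_coeff_mult_skew_mult_rho_l:
  assumes "degree p + degree w < n"
  shows "(\<Sum>l<n. coeff u l * coeff (p \<diamondop> rho_l \<theta> w) l)
       = (\<Sum>t\<le>degree p. coeff p t * coeff (u \<diamondop> w) (degree w + t))"
proof -
  have "p \<diamondop> rho_l \<theta> w = (\<Sum>t\<le>degree p. Polynomial.smult (coeff p t) (skew_reflect (degree w + t) w))"
  proof -
    have "monom c t \<diamondop> rho_l \<theta> w = Polynomial.smult c (skew_reflect (degree w + t) w)" for c t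
      by (simp only: monom_skew_mult[of c] monom_1_skew_mult_rho_l)
    then show ?thesis
      by (subst (1) poly_as_sum_of_monoms[symmetric]) (simp add: skew_mult_sum_left)
  qed
  then have "(\<Sum>l<n. coeff u l * coeff (p \<diamondop> rho_l \<theta> w) l)
      = (\<Sum>t\<le>degree p. coeff p t * (\<Sum>l<n. coeff u l * coeff (skew_reflect (degree w + t) w) l))"
    by (simp add: coeff_sum sum_distrib_left mult.left_commute sum.swap[where A = "{..<n}"])
  also have "\<dots> = (\<Sum>t\<le>degree p. coeff p t * coeff (u \<diamondop> w) (degree w + t))"
    using assms by (intro sum.cong refl) (simp add: sum_coeff_mult_skew_reflect)
  finally show ?thesis .
qed

section \<open>The coefficientwise action of \<open>\<theta>\<^sup>-\<^sup>n\<close>\<close>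

lemma bij_theta: "bij \<theta>"
proof -
  interpret field_isom \<theta> by (rule field_isom)
  show ?thesis by (rule bij)
qed

lemma theta_neg_pow_eq_map_poly: "theta_neg_pow \<theta> n f = map_poly (Hilbert_Choice.inv (\<theta> ^^ n)) f"
  unfolding theta_neg_pow_def by (simp add: inv_fn[OF bij_theta])

lemma theta_neg_pow_skew_mult:
  "theta_neg_pow \<theta> n (f \<diamondop> g) = theta_neg_pow \<theta> n f \<diamondop> theta_neg_pow \<theta> n g"
proof -
  interpret pow_n: field_isom "\<theta> ^^ n" by (rule field_isom_funpow[OF field_isom])
  have "Hilbert_Choice.inv (\<theta> ^^ n) (\<theta> x) = \<theta> (Hilbert_Choice.inv (\<theta> ^^ n) x)" for x
    using funpow_swap1[of \<theta> n "Hilbert_Choice.inv (\<theta> ^^ n) x"] by simp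
  then show ?thesis
    unfolding theta_neg_pow_eq_map_poly by (rule map_poly_skew_mult[OF pow_n.inv.semiring_hom_axioms])
qed

lemma funpow_inv_funpow_apply[simp]: "(\<theta> ^^ n) (Hilbert_Choice.inv (\<theta> ^^ n) x) = x"
  and inv_funpow_funpow_apply[simp]: "Hilbert_Choice.inv (\<theta> ^^ n) ((\<theta> ^^ n) x) = x"
  using bij_fn[OF bij_theta, of n] by (simp_all add: bij_is_surj surj_f_inv_f bij_is_inj)

sublocale inv_pow: field_hom "Hilbert_Choice.inv (\<theta> ^^ i)" for i
proof -
  interpret pow_i: field_isom "\<theta> ^^ i" by (rule field_isom_funpow[OF field_isom])
  show "field_hom (Hilbert_Choice.inv (\<theta> ^^ i))" by (rule pow_i.inv.field_hom_axioms)
qed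

lemma coeff_theta_neg_pow: "coeff (theta_neg_pow \<theta> n f) i = Hilbert_Choice.inv (\<theta> ^^ n) (coeff f i)"
  by (simp add: theta_neg_pow_eq_map_poly coeff_map_poly)

lemma degree_theta_neg_pow[simp]: "degree (theta_neg_pow \<theta> n f) = degree f"
  by (simp add: theta_neg_pow_eq_map_poly degree_map_poly)

lemma theta_neg_pow_map_poly_funpow: "theta_neg_pow \<theta> n (map_poly (\<theta> ^^ n) f) = f"
  by (rule poly_eqI) (simp add: coeff_theta_neg_pow coeff_map_poly)

lemma theta_neg_pow_xn_minus:
  "theta_neg_pow \<theta> n (xn_minus k b) = xn_minus k (Hilbert_Choice.inv (\<theta> ^^ n) b)"
  by (rule poly_eqI) (simp add: coeff_theta_neg_pow coeff_xn_minus hom_distribs)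

lemma theta_neg_pow_eq_0_iff[simp]: "theta_neg_pow \<theta> n f = 0 \<longleftrightarrow> f = 0"
  by (simp add: theta_neg_pow_eq_map_poly map_poly_eq_0_iff)

section \<open>Factorizations of \<open>x\<^sup>n - a\<close>\<close>

lemma rho_l_xn_minus:
  assumes "n > 0" "b \<noteq> 0"
  shows "rho_l \<theta> (xn_minus n b) = Polynomial.smult (- (\<theta> ^^ n) b) (xn_minus n (inverse ((\<theta> ^^ n) b)))"
proof (rule poly_eqI)
  fix i
  have "i = 0 \<or> i = n \<or> (0 < i \<and> i < n) \<or> n < i" by linarith
  then show "coeff (rho_l \<theta> (xn_minus n b)) i
      = coeff (Polynomial.smult (- (\<theta> ^^ n) b) (xn_minus n (inverse ((\<theta> ^^ n) b)))) i"
    using assms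
    by (auto simp: rho_l_eq_skew_reflect degree_xn_minus coeff_skew_reflect coeff_xn_minus hom_distribs)
qed

context
  fixes n :: nat and a :: 'a and g h :: "'a poly"
  assumes n_pos: "n > 0" and a_nonzero: "a \<noteq> 0" and factorization: "xn_minus n a = h \<diamondop> g"
begin

lemma factors_nonzero: "g \<noteq> 0" "h \<noteq> 0"
  using xn_minus_neq_0[OF n_pos, of a] factorization skew_mult_eq_0_iff by auto

lemma coeff_0_factors: "coeff h 0 * coeff g 0 = - a"
  using arg_cong[OF factorization, of "\<lambda>p. coeff p 0"] n_pos
  by (simp add: coeff_skew_mult coeff_xn_minus)

lemma coeff_0_factors_nonzero: "coeff g 0 \<noteq> 0" "coeff h 0 \<noteq> 0"
  using coeff_0_factors a_nonzero by auto

lemma degree_factors: "degree h + degree g = n"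
  using degree_skew_mult[OF factors_nonzero(2,1)] factorization degree_xn_minus[OF n_pos] by metis

lemma gamma_factorization:
  "map_poly (\<theta> ^^ n) g \<diamondop> h = xn_minus n (gamma \<theta> n a g)"
  "map_poly (\<theta> ^^ n) g \<diamondop> [:a:] = Polynomial.smult (gamma \<theta> n a g) g"
proof -
  define w where "w = monom 1 n - map_poly (\<theta> ^^ n) g \<diamondop> h"
  have expand: "map_poly (\<theta> ^^ n) g \<diamondop> h \<diamondop> g
      = map_poly (\<theta> ^^ n) g \<diamondop> monom 1 n - map_poly (\<theta> ^^ n) g \<diamondop> [:a:]"
    by (simp add: skew_mult_assoc factorization[symmetric] xn_minus_def skew_mult_diff_right)
  have "w \<diamondop> g = map_poly (\<theta> ^^ n) g \<diamondop> monom 1 n - map_poly (\<theta> ^^ n) g \<diamondop> h \<diamondop> g"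
    by (simp add: w_def skew_mult_diff_left monom_1_skew_mult_commute)
  then have w_g: "w \<diamondop> g = map_poly (\<theta> ^^ n) g \<diamondop> [:a:]"
    by (simp add: expand)
  \<comment> \<open>\<open>w g\<close> has degree at most \<open>deg g\<close>, so \<open>w\<close> is the constant read off in degree 0\<close>
  have "degree (map_poly (\<theta> ^^ n) g \<diamondop> [:a:]) \<le> degree g"
    by (rule degree_le) (simp add: coeff_skew_mult_const coeff_map_poly coeff_eq_0)
  then have "degree w = 0"
    using w_g degree_skew_mult[OF _ factors_nonzero(1), of w] by (cases "w = 0") auto
  then have w_const: "w = [:coeff w 0:]"
    by (rule degree_0_id[symmetric])
  have "coeff w 0 * coeff g 0 = (\<theta> ^^ n) (coeff g 0) * a"
    using arg_cong[OF w_g, of "\<lambda>p. coeff p 0"]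
    by (subst (asm) w_const) (simp add: const_skew_mult coeff_skew_mult_const coeff_map_poly)
  then have "coeff w 0 = gamma \<theta> n a g"
    using coeff_0_factors_nonzero(1) unfolding gamma_def by (simp add: field_simps)
  then have w: "w = [:gamma \<theta> n a g:]"
    using w_const by simp
  then show "map_poly (\<theta> ^^ n) g \<diamondop> h = xn_minus n (gamma \<theta> n a g)"
    unfolding xn_minus_def w_def by (simp add: algebra_simps)
  show "map_poly (\<theta> ^^ n) g \<diamondop> [:a:] = Polynomial.smult (gamma \<theta> n a g) g"
    using w_g w by (simp add: const_skew_mult)
qed

lemma skew_rem_gamma_eq_0:
  "skew_rem \<theta> n (gamma \<theta> n a g) (skew_rem \<theta> n a (f \<diamondop> g) \<diamondop> Polynomial.smult (inverse a) h) = 0"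
proof -
  define c where "c = gamma \<theta> n a g"
  have "c \<noteq> 0"
    using a_nonzero coeff_0_factors_nonzero(1) unfolding c_def gamma_def by simp
  obtain p where p: "skew_rem \<theta> n a (f \<diamondop> g) = p \<diamondop> g"
    using skew_rem_right_factor[OF n_pos factorization] by blast
  have "map_poly (\<theta> ^^ n) g = map_poly (\<theta> ^^ n) g \<diamondop> ([:a:] \<diamondop> [:inverse a:])"
    using a_nonzero by (simp add: const_skew_mult flip: one_pCons)
  also have "\<dots> = Polynomial.smult c (g \<diamondop> [:inverse a:])"
    by (simp add: c_def gamma_factorization(2) skew_mult_smult_left flip: skew_mult_assoc)
  finally have g_a: "g \<diamondop> [:inverse a:] = Polynomial.smult (inverse c) (map_poly (\<theta> ^^ n) g)"
    using \<open>c \<noteq> 0\<close> by simp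
  have "g \<diamondop> Polynomial.smult (inverse a) h = g \<diamondop> [:inverse a:] \<diamondop> h"
    by (simp add: skew_mult_assoc const_skew_mult)
  also have "\<dots> = Polynomial.smult (inverse c) (xn_minus n c)"
    by (simp add: g_a skew_mult_smult_left c_def gamma_factorization(1))
  finally have "g \<diamondop> Polynomial.smult (inverse a) h = Polynomial.smult (inverse c) (xn_minus n c)" .
  then have "p \<diamondop> g \<diamondop> Polynomial.smult (inverse a) h = p \<diamondop> [:inverse c:] \<diamondop> xn_minus n c"
    by (simp add: skew_mult_assoc const_skew_mult)
  then show ?thesis
    unfolding p c_def[symmetric] by (simp add: skew_rem_left_multiple[OF n_pos])
qed

lemma rho_l_theta_neg_pow_right_divides:
  "\<exists>q. xn_minus n (inverse a) = q \<diamondop> rho_l \<theta> (theta_neg_pow \<theta> n h)"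
proof -
  let ?g = "theta_neg_pow \<theta> n g" and ?h = "theta_neg_pow \<theta> n h"
  have nonzero: "?h \<noteq> 0" "?g \<noteq> 0"
    using factors_nonzero by simp_all
  have "?h \<diamondop> ?g = xn_minus n (Hilbert_Choice.inv (\<theta> ^^ n) a)"
    by (simp add: factorization[symmetric] theta_neg_pow_xn_minus flip: theta_neg_pow_skew_mult)
  then have reflected: "Polynomial.smult (- a) (xn_minus n (inverse a))
      = map_poly (\<theta> ^^ degree h) (rho_l \<theta> ?g) \<diamondop> rho_l \<theta> ?h"
    using rho_l_skew_mult[OF nonzero] rho_l_xn_minus[OF n_pos, of "Hilbert_Choice.inv (\<theta> ^^ n) a"]
      a_nonzero by simp
  have "xn_minus n (inverse a)
      = Polynomial.smult (- inverse a) (Polynomial.smult (- a) (xn_minus n (inverse a)))"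
    using a_nonzero by simp
  also have "\<dots> = Polynomial.smult (- inverse a) (map_poly (\<theta> ^^ degree h) (rho_l \<theta> ?g)) \<diamondop> rho_l \<theta> ?h"
    by (simp only: reflected skew_mult_smult_left)
  finally show ?thesis by blast
qed

lemma sum_coeff_mult_skew_rem_eq_0:
  "(\<Sum>l<n. coeff (skew_rem \<theta> n a (f \<diamondop> g)) l
      * coeff (skew_rem \<theta> n (inverse a) (f' \<diamondop> rho_l \<theta> (theta_neg_pow \<theta> n h))) l) = 0"
proof -
  let ?h = "theta_neg_pow \<theta> n h"
  obtain p where p: "skew_rem \<theta> n a (f \<diamondop> g) = p \<diamondop> g"
    using skew_rem_right_factor[OF n_pos factorization] by blast
  obtain q where "xn_minus n (inverse a) = q \<diamondop> rho_l \<theta> ?h"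
    using rho_l_theta_neg_pow_right_divides by blast
  then obtain p' where p': "skew_rem \<theta> n (inverse a) (f' \<diamondop> rho_l \<theta> ?h) = p' \<diamondop> rho_l \<theta> ?h"
    using skew_rem_right_factor[OF n_pos] by blast
  show ?thesis
  proof (cases "p = 0 \<or> p' = 0")
    case True
    then show ?thesis by (auto simp: p p')
  next
    case False
    have degree_h: "degree (rho_l \<theta> ?h) = degree h"
      using degree_rho_l[of ?h] coeff_0_factors_nonzero(2) by (simp add: coeff_theta_neg_pow)
    have "coeff (rho_l \<theta> ?h) (degree h) \<noteq> 0"
      using coeff_0_factors_nonzero(2)
      by (simp add: coeff_theta_neg_pow rho_l_eq_skew_reflect coeff_skew_reflect)
    then have "rho_l \<theta> ?h \<noteq> 0" by auto
    have "degree p + degree g < n"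
      using degree_skew_rem_less[OF n_pos, of a "f \<diamondop> g"] False factors_nonzero(1)
      by (simp add: p degree_skew_mult)
    then have p_below: "degree p < degree h"
      using degree_factors by simp
    have "degree p' + degree ?h < n"
      using degree_skew_rem_less[OF n_pos, of "inverse a" "f' \<diamondop> rho_l \<theta> ?h"] False \<open>rho_l \<theta> ?h \<noteq> 0\<close>
      by (simp add: p' degree_skew_mult degree_h)
    moreover have "g \<diamondop> ?h = theta_neg_pow \<theta> n (map_poly (\<theta> ^^ n) g \<diamondop> h)"
      by (simp add: theta_neg_pow_skew_mult theta_neg_pow_map_poly_funpow)
    then have "p \<diamondop> g \<diamondop> ?h = p \<diamondop> xn_minus n (Hilbert_Choice.inv (\<theta> ^^ n) (gamma \<theta> n a g))"
      by (simp add: skew_mult_assoc gamma_factorization(1) theta_neg_pow_xn_minus)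
    ultimately show ?thesis
      using p_below
      by (simp add: p p' sum_coeff_mult_skew_mult_rho_l coeff_skew_mult_xn_minus_below)
  qed
qed

lemma Mtheta_mult_Mtheta_gamma_eq_0:
  "Mtheta \<theta> n a g * Mtheta \<theta> n (gamma \<theta> n a g) (Polynomial.smult (inverse a) h) = 0\<^sub>m n n"
proof (rule eq_matI)
  fix i j assume "i < dim_row (0\<^sub>m n n :: 'a mat)" "j < dim_col (0\<^sub>m n n :: 'a mat)"
  then show "(Mtheta \<theta> n a g * Mtheta \<theta> n (gamma \<theta> n a g) (Polynomial.smult (inverse a) h)) $$ (i, j)
      = 0\<^sub>m n n $$ (i, j)"
    by (simp add: Mtheta_mult_Mtheta_entry[OF n_pos] skew_rem_gamma_eq_0)
qed (simp_all add: Mtheta_def)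

lemma Mtheta_mult_transpose_Mtheta_rho_l_eq_0:
  "Mtheta \<theta> n a g * transpose_mat (Mtheta \<theta> n (inverse a) (rho_l \<theta> (theta_neg_pow \<theta> n h)))
    = 0\<^sub>m n n"
  by (rule eq_matI)
     (simp_all add: Mtheta_def scalar_prod_def atLeast0LessThan sum_coeff_mult_skew_rem_eq_0)

end

end

theorem theorem5p8:
  fixes \<theta> :: "'a::{finite, field} \<Rightarrow> 'a" and n :: nat and a :: 'a and g h :: "'a poly"
  assumes "field_aut \<theta>"
    and "a \<noteq> 0"
    and "xn_minus n a = skew_mult \<theta> h g"
  shows "Mtheta \<theta> n a g * Mtheta \<theta> n (gamma \<theta> n a g) (Polynomial.smult (inverse a) h) = 0\<^sub>m n n \<and>
         Mtheta \<theta> n a g * transpose_mat (Mtheta \<theta> n (inverse a) (rho_l \<theta> (theta_neg_pow \<theta> n h))) = 0\<^sub>m n n"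
proof (cases "n = 0")
  case True
  then show ?thesis by (auto intro!: eq_matI simp: Mtheta_def)
next
  case False
  interpret skew_poly \<theta>
    by (rule skew_poly.intro[OF field_aut_imp_field_isom[OF assms(1)]])
  show ?thesis
    using Mtheta_mult_Mtheta_gamma_eq_0 Mtheta_mult_transpose_Mtheta_rho_l_eq_0 False assms(2,3) by simp
qed

end
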